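(* Let $f$ be a smooth probability density with respect to $\gamma$ on $\mathbb{R}^n$ such that $\int x f\,d\gamma=0$, $\int|x|^2f\,d\gamma<\infty$ and $\mathrm{I}(f)<\infty$. Then $$\lim_{t\to\infty}e^{2t}\,\mathrm{I}(P_tf)=0.$$
   Context: $\gamma$ is the standard Gaussian measure on $\mathbb{R}^n$, $\mathrm{I}(g)=\int\frac{|\nabla g|^2}{g}d\gamma$, and $P_tg(x)=\int_{\mathbb{R}^n} g(e^{-t}x+\sqrt{1-e^{-2t}}\,y)\,d\gamma(y)$ is the Ornstein–Uhlenbeck semigroup. *)

theory Defs
  imports "HOL-Analysis.Analysis"
begin

definition gauss_dens :: "'a::euclidean_space \<Rightarrow> real" where
  "gauss_dens x = (2 * pi) powr (- real DIM('a) / 2) * exp (- ((norm x)\<^sup>2) / 2)"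

definition std_gaussian :: "'a::euclidean_space measure" where
  "std_gaussian = density lborel (\<lambda>x. ennreal (gauss_dens x))"

definition grad :: "('a::euclidean_space \<Rightarrow> real) \<Rightarrow> 'a \<Rightarrow> 'a" where
  "grad g x = (\<Sum>b\<in>Basis. frechet_derivative g (at x) b *\<^sub>R b)"

fun Ck :: "nat \<Rightarrow> ('a::euclidean_space \<Rightarrow> real) \<Rightarrow> bool" where
  "Ck 0 g = continuous_on UNIV g"
| "Ck (Suc k) g = (continuous_on UNIV g \<and> (\<forall>x. g differentiable (at x)) \<and>
      (\<forall>b\<in>Basis. Ck k (\<lambda>x. frechet_derivative g (at x) b)))"

definition smooth_fun :: "('a::euclidean_space \<Rightarrow> real) \<Rightarrow> bool" where
  "smooth_fun g \<longleftrightarrow> (\<forall>k. Ck k g)"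

text \<open>Fisher information I(g) = int |grad g|^2 / g d gamma, as an extended nonnegative
  real (value infinity allowed); where g = 0 the integrand is 0 (convention x/0 = 0).\<close>
definition fisher :: "('a::euclidean_space \<Rightarrow> real) \<Rightarrow> ennreal" where
  "fisher g = (\<integral>\<^sup>+ x. ennreal ((norm (grad g x))\<^sup>2 / g x) \<partial>std_gaussian)"

definition OU :: "real \<Rightarrow> ('a::euclidean_space \<Rightarrow> real) \<Rightarrow> 'a \<Rightarrow> real" where
  "OU t g x = (\<integral>y. g (exp (- t) *\<^sub>R x + sqrt (1 - exp (- 2 * t)) *\<^sub>R y) \<partial>std_gaussian)"

end

theory Submission
  imports Defs "HOL-Probability.Distributions"
begin

text \<open>
  By Mehler's formula, \<open>P\<^sub>t f x = \<integral> f z M\<^sub>r(x, z) d\<gamma>(z)\<close> with \<open>r = e\<^sup>-\<^sup>t\<close> and an explicit Gaussian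
  kernel \<open>M\<^sub>r\<close>. Differentiating under the integral gives \<open>\<nabla>P\<^sub>t f = r/(1 - r\<^sup>2) B\<^sub>r\<close> with
  \<open>B\<^sub>r x = \<integral> (z - r x) f z M\<^sub>r(x, z) d\<gamma>(z)\<close>, so that \<open>e\<^sup>2\<^sup>t I(P\<^sub>t f)\<close> is the integral of
  \<open>|B\<^sub>r|\<^sup>2 / ((1 - r\<^sup>2)\<^sup>2 P\<^sub>t f)\<close>. As \<open>r \<rightarrow> 0\<close> the kernel tends to 1, hence \<open>P\<^sub>t f \<rightarrow> \<integral> f = 1\<close> and
  \<open>B\<^sub>r \<rightarrow> \<integral> z f z = 0\<close>: the integrand tends to 0 pointwise. By Cauchy--Schwarz it is dominated by
  \<open>C\<^sub>r / (1 - r\<^sup>2)\<^sup>2\<close>, \<open>C\<^sub>r x = \<integral> |z - r x|\<^sup>2 f z M\<^sub>r(x, z) d\<gamma>(z)\<close>, which tends pointwise to the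
  second moment \<open>m\<close> of \<open>f\<close>, while Fubini and Mehler's formula bound its integral by
  \<open>(1 + r)(m + O(r))\<close>. Pratt's lemma (dominated convergence with converging dominating
  functions) then gives convergence of the integrals to 0.
\<close>

lemma norm_diff_scaleR_le:
  fixes x z :: "'a::real_normed_vector"
  assumes "\<bar>r\<bar> \<le> 1"
  shows "norm (z - r *\<^sub>R x) \<le> norm z + norm x"
proof -
  have "\<bar>r\<bar> * norm x \<le> norm x" using assms by (intro mult_left_le_one_le) auto
  then show ?thesis using norm_triangle_ineq4[of z "r *\<^sub>R x"] by simp
qed

lemma power2_norm_diff_scaleR:
  fixes x z :: "'a::real_inner"
  shows "(norm (z - r *\<^sub>R x))\<^sup>2 = (norm z)\<^sup>2 - 2 * r * (x \<bullet> z) + r\<^sup>2 * (norm x)\<^sup>2"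
  by (simp only: power2_norm_eq_inner)
     (simp add: inner_diff_left inner_diff_right inner_commute algebra_simps power2_eq_square)

lemma power2_norm_diff_le:
  fixes u v :: "'a::real_normed_vector"
  assumes "0 < \<epsilon>"
  shows "(norm (u - v))\<^sup>2 \<le> (1 + \<epsilon>) * (norm u)\<^sup>2 + (1 + 1 / \<epsilon>) * (norm v)\<^sup>2"
proof -
  have "(norm (u - v))\<^sup>2 \<le> (norm u + norm v)\<^sup>2"
    using norm_triangle_ineq4[of u v] by (intro power_mono) auto
  moreover have "2 * norm u * norm v \<le> \<epsilon> * (norm u)\<^sup>2 + (norm v)\<^sup>2 / \<epsilon>"
  proof -
    have "0 \<le> (\<epsilon> * norm u - norm v)\<^sup>2" by simp
    then show ?thesis using assms by (simp add: field_simps power2_eq_square)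
  qed
  ultimately show ?thesis by (simp add: power2_sum algebra_simps)
qed

lemma quadratic_le_square_div:
  fixes b p \<rho> :: real
  assumes "0 < b"
  shows "p * \<rho> - b * \<rho>\<^sup>2 \<le> p\<^sup>2 / (4 * b)"
proof -
  have "0 \<le> (2 * b * \<rho> - p)\<^sup>2" by simp
  then show ?thesis using assms by (simp add: field_simps power2_eq_square)
qed

lemma abs_exp_sub_one_sub_le: "\<bar>exp u - 1 - u\<bar> \<le> u\<^sup>2 * exp \<bar>u\<bar>" for u :: real
proof -
  obtain t where t: "\<bar>t\<bar> \<le> \<bar>u\<bar>" "exp u = (\<Sum>m<2. u ^ m / fact m) + exp t / fact 2 * u ^ 2"
    using Maclaurin_exp_le[of u 2] by blast
  then have "\<bar>exp u - 1 - u\<bar> = exp t * u\<^sup>2 / 2" by (simp add: numeral_2_eq_2)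
  moreover have "exp t * u\<^sup>2 \<le> exp \<bar>u\<bar> * u\<^sup>2" using t(1) by (intro mult_right_mono) auto
  moreover have "0 \<le> exp \<bar>u\<bar> * u\<^sup>2" by simp
  ultimately show ?thesis by (simp add: mult.commute del: exp_ge_zero)
qed

lemma abs_exp_remainder_le:
  fixes s q b w :: real
  assumes s: "0 \<le> s" "s \<le> 1" and "0 \<le> q" "0 \<le> b" and w: "\<bar>w\<bar> \<le> s * q"
  shows "\<bar>exp (w - b * s\<^sup>2) - 1 - w\<bar> \<le> s\<^sup>2 * ((q + b)\<^sup>2 * exp (q + b) + b)"
proof -
  define u where "u = w - b * s\<^sup>2"
  have "s\<^sup>2 \<le> s" using s by (simp add: power2_eq_square mult_left_le_one_le)
  then have "b * s\<^sup>2 \<le> s * b" using \<open>0 \<le> b\<close> by (simp add: mult_left_mono mult.commute)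
  moreover have "0 \<le> b * s\<^sup>2" using \<open>0 \<le> b\<close> by simp
  ultimately have u: "\<bar>u\<bar> \<le> s * (q + b)"
    using w unfolding u_def distrib_left abs_le_iff by linarith
  have "\<bar>exp u - 1 - w\<bar> \<le> \<bar>exp u - 1 - u\<bar> + b * s\<^sup>2"
    using \<open>0 \<le> b * s\<^sup>2\<close> by (simp add: u_def abs_if)
  also have "\<bar>exp u - 1 - u\<bar> \<le> u\<^sup>2 * exp \<bar>u\<bar>"
    by (rule abs_exp_sub_one_sub_le)
  also have "u\<^sup>2 * exp \<bar>u\<bar> \<le> s\<^sup>2 * (q + b)\<^sup>2 * exp (q + b)"
  proof (intro mult_mono)
    show "u\<^sup>2 \<le> s\<^sup>2 * (q + b)\<^sup>2"
      using u by (metis abs_ge_zero power2_abs power_mono power_mult_distrib)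
    have "s * (q + b) \<le> q + b" using s assms by (intro mult_left_le_one_le) auto
    then show "exp \<bar>u\<bar> \<le> exp (q + b)" using u by simp
  qed auto
  finally show ?thesis
    by (simp add: u_def algebra_simps)
qed

lemma power2_mult_exp_le: "0 \<le> p \<Longrightarrow> p\<^sup>2 * exp p \<le> 2 * exp (2 * p)" for p :: real
  using exp_lower_Taylor_quadratic[of p] mult_right_mono[of "p\<^sup>2" "2 * exp p" "exp p"]
  by (simp add: exp_double power2_eq_square)

lemma integral_weighted_Cauchy_Schwarz:
  fixes w :: "'a \<Rightarrow> real" and v :: "'a \<Rightarrow> 'b::{real_inner, banach, second_countable_topology}"
  assumes nonneg: "\<And>x. 0 \<le> w x"
    and int: "integrable M w" "integrable M (\<lambda>x. w x *\<^sub>R v x)"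
      "integrable M (\<lambda>x. w x * (norm (v x))\<^sup>2)"
  shows "(norm (\<integral>x. w x *\<^sub>R v x \<partial>M))\<^sup>2 \<le> (\<integral>x. w x \<partial>M) * (\<integral>x. w x * (norm (v x))\<^sup>2 \<partial>M)"
proof -
  define W where "W = (\<integral>x. w x \<partial>M)"
  define B where "B = (\<integral>x. w x *\<^sub>R v x \<partial>M)"
  define Q where "Q = (\<integral>x. w x * (norm (v x))\<^sup>2 \<partial>M)"
  have W: "0 \<le> W" unfolding W_def using nonneg by simp
  have "(\<integral>x. w x * (B \<bullet> v x) \<partial>M) = (\<integral>x. B \<bullet> (w x *\<^sub>R v x) \<partial>M)"
    by simp
  also have "\<dots> = B \<bullet> B"
    unfolding B_def by (rule integral_inner_right) (use int(2) in simp)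
  also have "\<dots> = (norm B)\<^sup>2"
    by (simp add: power2_norm_eq_inner)
  finally have inner_B: "(\<integral>x. w x * (B \<bullet> v x) \<partial>M) = (norm B)\<^sup>2" .
  have int_inner_B: "integrable M (\<lambda>x. w x * (B \<bullet> v x))"
    using integrable_inner_right[of B M "\<lambda>x. w x *\<^sub>R v x"] int(2) by simp
  have quadratic: "0 \<le> Q - 2 * t * (norm B)\<^sup>2 + t\<^sup>2 * (norm B)\<^sup>2 * W" for t
  proof -
    have "(\<integral>x. w x * (norm (v x - t *\<^sub>R B))\<^sup>2 \<partial>M)
        = (\<integral>x. w x * (norm (v x))\<^sup>2 - 2 * t * (w x * (B \<bullet> v x)) + t\<^sup>2 * (norm B)\<^sup>2 * w x \<partial>M)"
      by (intro Bochner_Integration.integral_cong refl)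
        (simp add: power2_norm_diff_scaleR algebra_simps)
    also have "\<dots> = Q - 2 * t * (norm B)\<^sup>2 + t\<^sup>2 * (norm B)\<^sup>2 * W"
      using int int_inner_B by (simp add: Q_def W_def inner_B)
    moreover have "0 \<le> (\<integral>x. w x * (norm (v x - t *\<^sub>R B))\<^sup>2 \<partial>M)"
      using nonneg by (intro integral_nonneg_AE AE_I2) simp
    ultimately show ?thesis by simp
  qed
  show ?thesis
  proof (cases "W = 0")
    case True
    show ?thesis
    proof (rule ccontr)
      assume "\<not> ?thesis"
      then have B: "0 < (norm B)\<^sup>2" using True by (simp add: B_def W_def)
      have "0 \<le> Q - 2 * ((Q + 1) / (2 * (norm B)\<^sup>2)) * (norm B)\<^sup>2"
        using quadratic[of "(Q + 1) / (2 * (norm B)\<^sup>2)"] True by simp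
      then show False using B by simp
    qed
  next
    case False
    then have "0 \<le> Q - (norm B)\<^sup>2 / W"
      using quadratic[of "1 / W"] W by (simp add: power2_eq_square field_simps)
    then show ?thesis using False W by (simp add: W_def B_def Q_def field_simps)
  qed
qed

lemma has_derivative_quadratic_remainder:
  fixes F :: "'a::real_normed_vector \<Rightarrow> 'b::real_normed_vector"
  assumes "bounded_linear L"
    and remainder: "\<And>h. norm h \<le> 1 \<Longrightarrow> norm (F (x + h) - F x - L h) \<le> C * (norm h)\<^sup>2"
  shows "(F has_derivative L) (at x)"
  unfolding has_derivative_at_alt
proof (intro conjI allI impI assms(1))
  fix e :: real assume e: "0 < e"
  define d where "d = min 1 (e / (\<bar>C\<bar> + 1))"
  show "\<exists>d>0. \<forall>y. norm (y - x) < d \<longrightarrow> norm (F y - F x - L (y - x)) \<le> e * norm (y - x)"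
  proof (intro exI[of _ d] conjI allI impI)
    show "0 < d" using e by (simp add: d_def)
    fix y assume y: "norm (y - x) < d"
    then have "norm (F y - F x - L (y - x)) \<le> C * (norm (y - x))\<^sup>2"
      using remainder[of "y - x"] by (simp add: d_def)
    also have "\<dots> \<le> ((\<bar>C\<bar> + 1) * norm (y - x)) * norm (y - x)"
      using mult_right_mono[of C "\<bar>C\<bar> + 1" "(norm (y - x))\<^sup>2"] by (simp add: power2_eq_square mult.assoc)
    also have "\<dots> \<le> e * norm (y - x)"
      using y e by (intro mult_right_mono) (simp_all add: d_def field_simps)
    finally show "norm (F y - F x - L (y - x)) \<le> e * norm (y - x)" .
  qed
qed

lemma Pratt_lemma_tendsto_0:
  fixes g D :: "nat \<Rightarrow> 'a \<Rightarrow> real"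
  assumes [measurable]: "\<And>n. g n \<in> borel_measurable M"
    and int: "\<And>n. integrable M (D n)" "integrable M Dl"
    and bounds: "\<And>n x. 0 \<le> g n x" "\<And>n x. g n x \<le> D n x"
    and lim: "AE x in M. (\<lambda>n. g n x) \<longlonglongrightarrow> 0" "AE x in M. (\<lambda>n. D n x) \<longlonglongrightarrow> Dl x"
    and limsup: "limsup (\<lambda>n. \<integral>\<^sup>+x. norm (D n x) \<partial>M) \<le> (\<integral>\<^sup>+x. norm (Dl x) \<partial>M)"
  shows "(\<lambda>n. \<integral>\<^sup>+x. g n x \<partial>M) \<longlonglongrightarrow> 0"
proof -
  have [measurable]: "Dl \<in> borel_measurable M" "D n \<in> borel_measurable M" for n
    using int by (simp_all add: borel_measurable_integrable)
  \<comment> \<open>\<open>g\<^sub>n \<le> |D\<^sub>n - Dl| + min g\<^sub>n |Dl|\<close>: the first part vanishes in \<open>L\<^sup>1\<close> by Scheffe's lemma,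
    the second by dominated convergence.\<close>
  define m where "m n x = min (g n x) (norm (Dl x))" for n x
  have [measurable]: "m n \<in> borel_measurable M" for n
    unfolding m_def by measurable
  have "g n x \<le> norm (D n x - Dl x) + m n x" for n x
    using bounds[of n x] by (cases "g n x \<le> norm (Dl x)") (auto simp: m_def)
  then have "ennreal (g n x) \<le> ennreal (norm (D n x - Dl x)) + ennreal (m n x)" for n x
    using bounds(1)[of n x] by (simp add: m_def ennreal_plus[symmetric] del: ennreal_plus)
  then have le: "(\<integral>\<^sup>+x. g n x \<partial>M) \<le> (\<integral>\<^sup>+x. norm (D n x - Dl x) \<partial>M) + (\<integral>\<^sup>+x. m n x \<partial>M)" for n
    by (subst nn_integral_add[symmetric]) (simp_all add: nn_integral_mono)
  have Scheffe: "(\<lambda>n. \<integral>\<^sup>+x. norm (D n x - Dl x) \<partial>M) \<longlonglongrightarrow> 0"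
    by (rule Scheffe_lemma1[OF int lim(2) limsup])
  have "(\<lambda>n. \<integral>\<^sup>+x. m n x \<partial>M) \<longlonglongrightarrow> (\<integral>\<^sup>+x. 0 \<partial>M)"
  proof (rule nn_integral_dominated_convergence[where w="\<lambda>x. norm (Dl x)"])
    show "(\<integral>\<^sup>+x. norm (Dl x) \<partial>M) < \<infinity>"
      using int(2) by (simp add: integrable_iff_bounded)
    show "AE x in M. ennreal (m n x) \<le> ennreal (norm (Dl x))" for n
      by (simp add: m_def)
    show "AE x in M. (\<lambda>n. ennreal (m n x)) \<longlonglongrightarrow> 0"
      using lim(1)
    proof eventually_elim
      case (elim x)
      then have "(\<lambda>n. m n x) \<longlonglongrightarrow> min 0 (norm (Dl x))"
        unfolding m_def by (intro tendsto_min tendsto_const)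
      then show ?case
        by (simp add: tendsto_ennrealI flip: ennreal_0)
    qed
  qed simp_all
  then have "(\<lambda>n. \<integral>\<^sup>+x. m n x \<partial>M) \<longlonglongrightarrow> 0"
    by simp
  from tendsto_add[OF Scheffe this]
  have sum_lim: "(\<lambda>n. (\<integral>\<^sup>+x. norm (D n x - Dl x) \<partial>M) + (\<integral>\<^sup>+x. m n x \<partial>M)) \<longlonglongrightarrow> 0"
    by simp
  show ?thesis
  proof (rule tendsto_sandwich[OF _ _ tendsto_const sum_lim])
    show "\<forall>\<^sub>F n in sequentially. 0 \<le> (\<integral>\<^sup>+x. g n x \<partial>M)"
      by simp
    show "\<forall>\<^sub>F n in sequentially. (\<integral>\<^sup>+x. g n x \<partial>M)
        \<le> (\<integral>\<^sup>+x. norm (D n x - Dl x) \<partial>M) + (\<integral>\<^sup>+x. m n x \<partial>M)"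
      using le by simp
  qed
qed

section \<open>The standard Gaussian measure\<close>

lemma sets_std_gaussian [measurable_cong]: "sets std_gaussian = sets borel"
  by (simp add: std_gaussian_def)

lemma space_std_gaussian [simp]: "space std_gaussian = UNIV"
  by (simp add: std_gaussian_def)

lemma gauss_dens_nonneg [simp]: "0 \<le> gauss_dens x"
  by (simp add: gauss_dens_def)

lemma gauss_dens_measurable [measurable]: "gauss_dens \<in> borel_measurable borel"
  unfolding gauss_dens_def by measurable

lemma nn_integral_std_gaussian:
  assumes [measurable]: "g \<in> borel_measurable borel"
  shows "(\<integral>\<^sup>+x. g x \<partial>std_gaussian) = (\<integral>\<^sup>+x. ennreal (gauss_dens x) * g x \<partial>lborel)"
  unfolding std_gaussian_def by (rule nn_integral_density) auto

lemma gauss_dens_eq_prod: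
  "gauss_dens (x::'a::euclidean_space) = (\<Prod>b\<in>Basis. std_normal_density (x \<bullet> b))"
proof -
  have norm_sq: "(norm x)\<^sup>2 = (\<Sum>b\<in>Basis. (x \<bullet> b)\<^sup>2)"
    unfolding power2_norm_eq_inner by (subst euclidean_inner) (simp add: power2_eq_square)
  have "(2 * pi) powr (- real DIM('a) / 2) = ((2 * pi) powr (-1/2)) ^ DIM('a)"
    by (subst powr_realpow[symmetric]) (auto simp: powr_powr)
  also have "(2 * pi) powr (-1/2) = 1 / sqrt (2 * pi)"
    by (simp add: powr_minus_divide powr_half_sqrt)
  finally have const: "(2 * pi) powr (- real DIM('a) / 2) = (\<Prod>b\<in>(Basis::'a set). 1 / sqrt (2 * pi))"
    by simp
  have "exp (- ((norm x)\<^sup>2) / 2) = (\<Prod>b\<in>Basis. exp (- ((x \<bullet> b)\<^sup>2) / 2))"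
    unfolding norm_sq by (simp add: exp_sum[symmetric] sum_divide_distrib[symmetric] sum_negf)
  then show ?thesis
    unfolding gauss_dens_def std_normal_density_def prod.distrib const by simp
qed

lemma nn_integral_std_normal_density: "(\<integral>\<^sup>+x. ennreal (std_normal_density x) \<partial>lborel) = 1"
  by (subst nn_integral_eq_integral) auto

lemma emeasure_std_gaussian_UNIV [simp]: "emeasure (std_gaussian :: 'a::euclidean_space measure) UNIV = 1"
proof -
  have "emeasure (std_gaussian :: 'a measure) UNIV
      = (\<integral>\<^sup>+x. (\<Prod>b\<in>Basis. ennreal (std_normal_density ((x::'a) \<bullet> b))) \<partial>lborel)"
    unfolding std_gaussian_def
    by (subst emeasure_density) (auto simp: gauss_dens_eq_prod prod_ennreal)
  also have "\<dots> = (\<Prod>b\<in>(Basis::'a set). \<integral>\<^sup>+x. ennreal (std_normal_density x) \<partial>lborel)"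
    by (rule nn_integral_lborel_prod) auto
  finally show ?thesis
    by (simp add: nn_integral_std_normal_density)
qed

lemma prob_space_std_gaussian: "prob_space std_gaussian"
  by (rule prob_spaceI) simp

lemma sigma_finite_std_gaussian: "sigma_finite_measure std_gaussian"
  by (rule prob_space_imp_sigma_finite[OF prob_space_std_gaussian])

lemma nn_integral_std_gaussian_norm_sq:
  "(\<integral>\<^sup>+y. ennreal ((norm y)\<^sup>2) \<partial>(std_gaussian :: 'a::euclidean_space measure)) = DIM('a)"
proof -
  have coordinate: "(\<integral>\<^sup>+y. ennreal ((y \<bullet> c)\<^sup>2) \<partial>(std_gaussian :: 'a measure)) = 1"
    if c: "c \<in> Basis" for c :: 'a
  proof -
    define g where "g b x = std_normal_density x * (if b = c then x\<^sup>2 else 1)" for b :: 'a and x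
    have "gauss_dens y * (y \<bullet> c)\<^sup>2 = (\<Prod>b\<in>Basis. g b (y \<bullet> b))" for y :: 'a
      using c by (simp add: g_def gauss_dens_eq_prod prod.distrib)
    then have "(\<integral>\<^sup>+y. ennreal ((y \<bullet> c)\<^sup>2) \<partial>(std_gaussian :: 'a measure))
        = (\<integral>\<^sup>+y. (\<Prod>b\<in>Basis. ennreal (g b ((y::'a) \<bullet> b))) \<partial>lborel)"
      by (simp add: nn_integral_std_gaussian ennreal_mult'[symmetric] prod_ennreal g_def)
    also have "\<dots> = (\<Prod>b\<in>(Basis::'a set). \<integral>\<^sup>+x. ennreal (g b x) \<partial>lborel)"
      by (rule nn_integral_lborel_prod) (auto simp: g_def)
    also have "\<dots> = 1"
    proof (intro prod.neutral ballI)
      have "(\<integral>\<^sup>+x. ennreal (std_normal_density x * x\<^sup>2) \<partial>lborel) = 1"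
        using integral_std_normal_moment_even[of 1]
        by (subst nn_integral_eq_integral) (auto intro: integrable_std_normal_moment)
      then show "(\<integral>\<^sup>+x. ennreal (g b x) \<partial>lborel) = 1" for b
        by (cases "b = c") (simp_all add: g_def nn_integral_std_normal_density)
    qed
    finally show ?thesis .
  qed
  have "(norm y)\<^sup>2 = (\<Sum>c\<in>Basis. (y \<bullet> c)\<^sup>2)" for y :: 'a
    unfolding power2_norm_eq_inner by (subst euclidean_inner) (simp add: power2_eq_square)
  then have "(\<integral>\<^sup>+y. ennreal ((norm y)\<^sup>2) \<partial>(std_gaussian :: 'a measure))
      = (\<Sum>c\<in>(Basis::'a set). \<integral>\<^sup>+y. ennreal ((y \<bullet> c)\<^sup>2) \<partial>std_gaussian)"
    by (simp add: nn_integral_sum[symmetric] sum_nonneg)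
  then show ?thesis
    by (simp add: coordinate)
qed

section \<open>The Mehler kernel\<close>

text \<open>The density with respect to \<open>\<gamma>\<close> of the law of \<open>r x + \<surd>(1 - r\<^sup>2) Y\<close>, \<open>Y \<sim> \<gamma>\<close>.\<close>

definition mehler_kernel :: "real \<Rightarrow> 'a::euclidean_space \<Rightarrow> 'a \<Rightarrow> real" where
  "mehler_kernel r x z = (1 - r\<^sup>2) powr (- real DIM('a) / 2) *
     exp ((2 * r * (x \<bullet> z) - r\<^sup>2 * ((norm x)\<^sup>2 + (norm z)\<^sup>2)) / (2 * (1 - r\<^sup>2)))"

lemma mehler_kernel_nonneg [simp]: "0 \<le> mehler_kernel r x z"
  by (simp add: mehler_kernel_def)

lemma mehler_kernel_commute: "mehler_kernel r x z = mehler_kernel r z x"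
  by (simp add: mehler_kernel_def inner_commute add.commute)

lemma mehler_kernel_measurable [measurable]:
  "(\<lambda>(x, z). mehler_kernel r x z) \<in> borel_measurable (borel \<Otimes>\<^sub>M borel)"
  unfolding mehler_kernel_def by measurable

lemma gauss_dens_mehler_kernel:
  fixes x z :: "'a::euclidean_space"
  assumes r: "r\<^sup>2 < 1"
  shows "(1 - r\<^sup>2) powr (- real DIM('a) / 2) * gauss_dens ((1 / sqrt (1 - r\<^sup>2)) *\<^sub>R (z - r *\<^sub>R x))
      = gauss_dens z * mehler_kernel r x z"
proof -
  have s: "0 < 1 - r\<^sup>2" using r by simp
  have norm_sq: "(norm ((1 / sqrt (1 - r\<^sup>2)) *\<^sub>R (z - r *\<^sub>R x)))\<^sup>2
      = ((norm z)\<^sup>2 - 2 * r * (x \<bullet> z) + r\<^sup>2 * (norm x)\<^sup>2) / (1 - r\<^sup>2)"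
    using s by (simp add: power_mult_distrib power_divide power2_norm_diff_scaleR)
  have exponent: "- (((norm z)\<^sup>2 - 2 * r * (x \<bullet> z) + r\<^sup>2 * (norm x)\<^sup>2) / (1 - r\<^sup>2)) / 2
      = - ((norm z)\<^sup>2) / 2 + (2 * r * (x \<bullet> z) - r\<^sup>2 * ((norm x)\<^sup>2 + (norm z)\<^sup>2)) / (2 * (1 - r\<^sup>2))"
    using s by (simp add: field_simps)
  show ?thesis
    unfolding gauss_dens_def mehler_kernel_def norm_sq exponent exp_add by simp
qed

lemma nn_integral_mehler_formula:
  fixes x :: "'a::euclidean_space" and H :: "'a \<Rightarrow> ennreal"
  assumes r: "0 < r" "r < 1" and [measurable]: "H \<in> borel_measurable borel"
  shows "(\<integral>\<^sup>+y. H (r *\<^sub>R x + sqrt (1 - r\<^sup>2) *\<^sub>R y) \<partial>std_gaussian)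
       = (\<integral>\<^sup>+z. ennreal (mehler_kernel r x z) * H z \<partial>std_gaussian)"
proof -
  have r2: "r\<^sup>2 < 1" using r by (simp add: power_less_one_iff abs_square_less_1)
  define s where "s = sqrt (1 - r\<^sup>2)"
  have s: "0 < s" using r2 by (simp add: s_def)
  define Q where "Q z = ennreal ((1 - r\<^sup>2) powr (- real DIM('a) / 2) * gauss_dens ((1 / s) *\<^sub>R (z - r *\<^sub>R x))) * H z" for z
  have [measurable]: "Q \<in> borel_measurable borel" unfolding Q_def by measurable
  have jacobian: "\<bar>s\<bar> ^ DIM('a) * (1 - r\<^sup>2) powr (- real DIM('a) / 2) = 1"
  proof -
    have "\<bar>s\<bar> ^ DIM('a) = (1 - r\<^sup>2) powr (real DIM('a) / 2)"
      using r2 s by (simp add: s_def powr_half_sqrt[symmetric] powr_realpow[symmetric] powr_powr)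
    then show ?thesis using r2 by (simp add: powr_add[symmetric])
  qed
  have "(\<integral>\<^sup>+y. H (r *\<^sub>R x + s *\<^sub>R y) \<partial>std_gaussian)
      = (\<integral>\<^sup>+y. ennreal (\<bar>s\<bar> ^ DIM('a)) * Q (r *\<^sub>R x + s *\<^sub>R y) \<partial>lborel)"
  proof (subst nn_integral_std_gaussian, measurable, intro nn_integral_cong)
    fix y :: 'a
    have "(1 / s) *\<^sub>R (r *\<^sub>R x + s *\<^sub>R y - r *\<^sub>R x) = y" using s by simp
    then show "ennreal (gauss_dens y) * H (r *\<^sub>R x + s *\<^sub>R y) = ennreal (\<bar>s\<bar> ^ DIM('a)) * Q (r *\<^sub>R x + s *\<^sub>R y)"
      unfolding Q_def using jacobian
      by (simp add: mult.assoc[symmetric] ennreal_mult'[symmetric] powr_nonneg_iff)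
  qed
  also have "\<dots> = (\<integral>\<^sup>+z. Q z \<partial>lborel)"
    by (subst lborel_affine[of s "r *\<^sub>R x"]) (use s in \<open>simp_all add: nn_integral_density nn_integral_distr\<close>)
  also have "\<dots> = (\<integral>\<^sup>+z. ennreal (mehler_kernel r x z) * H z \<partial>std_gaussian)"
    unfolding Q_def s_def using gauss_dens_mehler_kernel[OF r2, of _ x]
    by (subst nn_integral_std_gaussian, measurable) (intro nn_integral_cong, simp add: mult.assoc ennreal_mult)
  finally show ?thesis by (simp add: s_def)
qed

lemma mehler_kernel_le:
  fixes x z :: "'a::euclidean_space"
  assumes r: "r\<^sup>2 < 1"
  shows "mehler_kernel r x z \<le> (1 - r\<^sup>2) powr (- real DIM('a) / 2) * exp ((norm x)\<^sup>2 / 2)"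
proof -
  have "0 \<le> (norm (x - r *\<^sub>R z))\<^sup>2" by simp
  then have "(2 * r * (x \<bullet> z) - r\<^sup>2 * ((norm x)\<^sup>2 + (norm z)\<^sup>2)) / (2 * (1 - r\<^sup>2)) \<le> (norm x)\<^sup>2 / 2"
    using r by (simp add: power2_norm_diff_scaleR inner_commute field_simps)
  then show ?thesis unfolding mehler_kernel_def by (intro mult_left_mono) auto
qed

lemma mehler_kernel_moment_le:
  fixes x z :: "'a::euclidean_space"
  assumes r: "\<bar>r\<bar> \<le> s" "s < 1"
  shows "mehler_kernel r x z * (1 + (norm (z - r *\<^sub>R x))\<^sup>2)
    \<le> (1 - s\<^sup>2) powr (- real DIM('a) / 2) * exp ((norm x)\<^sup>2 / 2) * (2 * (1 + (norm x)\<^sup>2) * (1 + (norm z)\<^sup>2))"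
proof (rule mult_mono)
  have "r\<^sup>2 \<le> s\<^sup>2" using r by (metis abs_ge_zero power2_abs power_mono)
  moreover have "s\<^sup>2 < 1" using r by (simp add: power_less_one_iff abs_square_less_1)
  ultimately have "(1 - r\<^sup>2) powr (- real DIM('a) / 2) \<le> (1 - s\<^sup>2) powr (- real DIM('a) / 2)"
    by (intro powr_mono2') auto
  then show "mehler_kernel r x z \<le> (1 - s\<^sup>2) powr (- real DIM('a) / 2) * exp ((norm x)\<^sup>2 / 2)"
    using mehler_kernel_le[of r x z] \<open>r\<^sup>2 \<le> s\<^sup>2\<close> \<open>s\<^sup>2 < 1\<close>
    by (meson exp_ge_zero le_less_trans mult_right_mono order_trans)
  have "norm (z - r *\<^sub>R x) \<le> norm z + norm x" using r by (intro norm_diff_scaleR_le) auto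
  then have "(norm (z - r *\<^sub>R x))\<^sup>2 \<le> (norm z + norm x)\<^sup>2" by (intro power_mono) auto
  also have "\<dots> \<le> 2 * (norm z)\<^sup>2 + 2 * (norm x)\<^sup>2"
    using zero_le_power2[of "norm z - norm x"] by (simp add: power2_sum power2_diff)
  moreover have "2 * (1 + (norm x)\<^sup>2) * (1 + (norm z)\<^sup>2)
      = 2 + 2 * (norm x)\<^sup>2 + 2 * (norm z)\<^sup>2 + 2 * ((norm x)\<^sup>2 * (norm z)\<^sup>2)"
    by (simp add: algebra_simps)
  moreover have "0 \<le> (norm x)\<^sup>2 * (norm z)\<^sup>2" by simp
  ultimately show "1 + (norm (z - r *\<^sub>R x))\<^sup>2 \<le> 2 * (1 + (norm x)\<^sup>2) * (1 + (norm z)\<^sup>2)"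
    by linarith
qed auto

lemma mehler_kernel_le_gaussian:
  fixes x z :: "'a::euclidean_space"
  assumes r: "0 \<le> r" "r\<^sup>2 < 1"
  shows "mehler_kernel r x z \<le> (1 - r\<^sup>2) powr (- real DIM('a) / 2) *
     exp (r / (1 - r\<^sup>2) * norm x * norm z - r\<^sup>2 / (2 * (1 - r\<^sup>2)) * (norm z)\<^sup>2)"
proof -
  have s: "0 < 1 - r\<^sup>2" using r by simp
  have "2 * r * (x \<bullet> z) \<le> 2 * r * (norm x * norm z)"
    using r norm_cauchy_schwarz[of x z] by (simp add: mult_left_mono)
  moreover have "0 \<le> r\<^sup>2 * (norm x)\<^sup>2" by simp
  ultimately have "2 * r * (x \<bullet> z) - r\<^sup>2 * ((norm x)\<^sup>2 + (norm z)\<^sup>2)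
      \<le> 2 * r * (norm x * norm z) - r\<^sup>2 * (norm z)\<^sup>2"
    unfolding distrib_left by linarith
  then have "(2 * r * (x \<bullet> z) - r\<^sup>2 * ((norm x)\<^sup>2 + (norm z)\<^sup>2)) / (2 * (1 - r\<^sup>2))
      \<le> (2 * r * (norm x * norm z) - r\<^sup>2 * (norm z)\<^sup>2) / (2 * (1 - r\<^sup>2))"
    using s by (intro divide_right_mono) auto
  also have "\<dots> = r / (1 - r\<^sup>2) * norm x * norm z - r\<^sup>2 / (2 * (1 - r\<^sup>2)) * (norm z)\<^sup>2"
  proof -
    have identity: "(2 * r * (X * Z) - r\<^sup>2 * Z\<^sup>2) / (2 * q) = r / q * X * Z - r\<^sup>2 / (2 * q) * Z\<^sup>2"
      if "q \<noteq> 0" for X Z q :: real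
      using that by (simp add: field_simps)
    show ?thesis by (rule identity) (use s in simp)
  qed
  finally show ?thesis unfolding mehler_kernel_def by (intro mult_left_mono) auto
qed

lemma mehler_kernel_shift:
  fixes x h z :: "'a::euclidean_space"
  assumes r: "r\<^sup>2 < 1"
  shows "mehler_kernel r (x + h) z = mehler_kernel r x z *
    exp (r / (1 - r\<^sup>2) * (h \<bullet> (z - r *\<^sub>R x)) - r\<^sup>2 / (2 * (1 - r\<^sup>2)) * (norm h)\<^sup>2)"
proof -
  have s: "1 - r\<^sup>2 \<noteq> 0" using r by simp
  have exponent: "(2 * r * (p + q) - r\<^sup>2 * ((X + 2 * w + H) + Z)) / (2 * s)
      = (2 * r * p - r\<^sup>2 * (X + Z)) / (2 * s) + (r / s * (q - r * w) - r\<^sup>2 / (2 * s) * H)"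
    if "s \<noteq> 0" for p q w X Z H s :: real
    using that by (simp add: field_simps) (simp add: algebra_simps power2_eq_square)
  have "(norm (x + h))\<^sup>2 = (norm x)\<^sup>2 + 2 * (x \<bullet> h) + (norm h)\<^sup>2"
    by (simp only: power2_norm_eq_inner) (simp add: inner_add_left inner_add_right inner_commute)
  moreover have "h \<bullet> (z - r *\<^sub>R x) = h \<bullet> z - r * (x \<bullet> h)"
    by (simp add: inner_diff_right inner_commute)
  ultimately show ?thesis
    unfolding mehler_kernel_def using exponent[OF s, of "x \<bullet> z" "h \<bullet> z"]
    by (simp add: inner_add_left exp_add)
qed

lemma tendsto_mehler_kernel:
  assumes "(\<rho> \<longlongrightarrow> 0) F"
  shows "((\<lambda>i. mehler_kernel (\<rho> i) x z) \<longlongrightarrow> 1) F"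
proof -
  have "((\<lambda>i. mehler_kernel (\<rho> i) x z) \<longlongrightarrow> mehler_kernel 0 x z) F"
    unfolding mehler_kernel_def by (intro tendsto_intros assms) auto
  then show ?thesis by (simp add: mehler_kernel_def)
qed

lemma mehler_kernel_times_exp_bounded:
  fixes x :: "'a::euclidean_space"
  assumes r: "0 < r" "r < 1"
  obtains K where "\<And>z. mehler_kernel r x z * exp (c * norm z) \<le> K"
proof -
  have r2: "r\<^sup>2 < 1" using r by (simp add: power_less_one_iff abs_square_less_1)
  define \<kappa> where "\<kappa> = (1 - r\<^sup>2) powr (- real DIM('a) / 2)"
  define p where "p = r / (1 - r\<^sup>2) * norm x + c"
  define b where "b = r\<^sup>2 / (2 * (1 - r\<^sup>2))"
  have b: "0 < b" using r r2 by (simp add: b_def)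
  have "mehler_kernel r x z * exp (c * norm z) \<le> \<kappa> * exp (p\<^sup>2 / (4 * b))" for z
  proof -
    have "mehler_kernel r x z * exp (c * norm z)
        \<le> \<kappa> * exp (r / (1 - r\<^sup>2) * norm x * norm z - b * (norm z)\<^sup>2) * exp (c * norm z)"
      using mehler_kernel_le_gaussian[of r x z] r r2
      by (intro mult_right_mono) (simp_all add: \<kappa>_def b_def)
    also have "\<dots> = \<kappa> * exp (p * norm z - b * (norm z)\<^sup>2)"
      by (simp add: p_def mult.assoc exp_add[symmetric] algebra_simps)
    also have "\<dots> \<le> \<kappa> * exp (p\<^sup>2 / (4 * b))"
      using quadratic_le_square_div[OF b, of p "norm z"] by (intro mult_left_mono) (auto simp: \<kappa>_def)
    finally show ?thesis .
  qed
  then show ?thesis by (rule that)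
qed

lemma mehler_kernel_times_remainder_growth_bounded:
  fixes x :: "'a::euclidean_space"
  assumes r: "0 < r" "r < 1" and "0 \<le> a" "0 \<le> b"
  obtains K where "\<And>z. mehler_kernel r x z *
    ((a * (norm z + norm x) + b)\<^sup>2 * exp (a * (norm z + norm x) + b) + b) \<le> K"
proof -
  define c where "c = a * norm x + b"
  obtain K where K: "\<And>z. mehler_kernel r x z * exp (2 * a * norm z) \<le> K"
    using mehler_kernel_times_exp_bounded[OF r] by blast
  have "mehler_kernel r x z * ((a * (norm z + norm x) + b)\<^sup>2 * exp (a * (norm z + norm x) + b) + b)
      \<le> (2 * exp (2 * c) + b) * K" for z
  proof -
    have "(a * (norm z + norm x) + b)\<^sup>2 * exp (a * (norm z + norm x) + b) \<le> 2 * exp (2 * c) * exp (2 * a * norm z)"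
      using power2_mult_exp_le[of "a * (norm z + norm x) + b"] assms
      by (simp add: c_def exp_add[symmetric] algebra_simps)
    moreover have "b \<le> b * exp (2 * a * norm z)"
      using mult_left_mono[of 1 "exp (2 * a * norm z)" b] assms by simp
    ultimately have "(a * (norm z + norm x) + b)\<^sup>2 * exp (a * (norm z + norm x) + b) + b
        \<le> (2 * exp (2 * c) + b) * exp (2 * a * norm z)"
      by (simp add: algebra_simps)
    then have "mehler_kernel r x z * ((a * (norm z + norm x) + b)\<^sup>2 * exp (a * (norm z + norm x) + b) + b)
        \<le> (2 * exp (2 * c) + b) * (mehler_kernel r x z * exp (2 * a * norm z))"
      by (simp add: mult_left_mono mult.left_commute)
    also have "\<dots> \<le> (2 * exp (2 * c) + b) * K"
      using assms by (intro mult_left_mono K) auto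
    finally show ?thesis .
  qed
  then show ?thesis by (rule that)
qed

text \<open>The remainder of \<open>exp\<close> grows exponentially in \<open>z\<close>; the Gaussian decay of the kernel
  absorbs it, which makes the bound uniform in \<open>z\<close>.\<close>

lemma mehler_kernel_taylor:
  fixes x :: "'a::euclidean_space"
  assumes r: "0 < r" "r < 1"
  obtains C where "\<And>z h. norm h \<le> 1 \<Longrightarrow>
    \<bar>mehler_kernel r (x + h) z - mehler_kernel r x z
       - mehler_kernel r x z * (r / (1 - r\<^sup>2) * (h \<bullet> (z - r *\<^sub>R x)))\<bar> \<le> C * (norm h)\<^sup>2"
proof -
  have r2: "r\<^sup>2 < 1" using r by (simp add: power_less_one_iff abs_square_less_1)
  define a where "a = r / (1 - r\<^sup>2)"
  define b where "b = r\<^sup>2 / (2 * (1 - r\<^sup>2))"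
  have a: "0 < a" and b: "0 < b" using r r2 by (simp_all add: a_def b_def)
  obtain K where K: "\<And>z. mehler_kernel r x z *
      ((a * (norm z + norm x) + b)\<^sup>2 * exp (a * (norm z + norm x) + b) + b) \<le> K"
    using mehler_kernel_times_remainder_growth_bounded[OF r, of a b] a b by auto
  show ?thesis
  proof (rule that[of K])
    fix z h :: 'a assume h: "norm h \<le> 1"
    define q where "q = a * (norm z + norm x)"
    define w where "w = a * (h \<bullet> (z - r *\<^sub>R x))"
    have "norm (z - r *\<^sub>R x) \<le> norm z + norm x"
      using r by (intro norm_diff_scaleR_le) auto
    then have "\<bar>w\<bar> \<le> norm h * q"
      using Cauchy_Schwarz_ineq2[of h "z - r *\<^sub>R x"] a
      by (simp add: w_def q_def abs_mult) (smt (verit) mult_left_mono mult.commute norm_ge_zero)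
    then have rem: "\<bar>exp (w - b * (norm h)\<^sup>2) - 1 - w\<bar> \<le> (norm h)\<^sup>2 * ((q + b)\<^sup>2 * exp (q + b) + b)"
      using h a b by (intro abs_exp_remainder_le) (auto simp: q_def)
    have "mehler_kernel r (x + h) z = mehler_kernel r x z * exp (w - b * (norm h)\<^sup>2)"
      using mehler_kernel_shift[OF r2, of x h z] by (simp only: a_def[symmetric] b_def[symmetric] w_def)
    then have "mehler_kernel r (x + h) z - mehler_kernel r x z - mehler_kernel r x z * w
        = mehler_kernel r x z * (exp (w - b * (norm h)\<^sup>2) - 1 - w)"
      by (simp add: algebra_simps)
    then have "\<bar>mehler_kernel r (x + h) z - mehler_kernel r x z - mehler_kernel r x z * w\<bar>
        = mehler_kernel r x z * \<bar>exp (w - b * (norm h)\<^sup>2) - 1 - w\<bar>"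
      by (simp add: abs_mult)
    also have "\<dots> \<le> (norm h)\<^sup>2 * (mehler_kernel r x z * ((q + b)\<^sup>2 * exp (q + b) + b))"
      using mult_left_mono[OF rem mehler_kernel_nonneg[of r x z]] by (simp add: mult_ac)
    also have "\<dots> \<le> (norm h)\<^sup>2 * K"
      using K[of z] by (intro mult_left_mono) (simp_all add: q_def)
    finally show "\<bar>mehler_kernel r (x + h) z - mehler_kernel r x z
       - mehler_kernel r x z * (r / (1 - r\<^sup>2) * (h \<bullet> (z - r *\<^sub>R x)))\<bar> \<le> K * (norm h)\<^sup>2"
      unfolding a_def[symmetric] w_def[symmetric] by (simp add: mult.commute)
  qed
qed

lemma power2_norm_mehler_displacement_le:
  fixes y z :: "'a::real_normed_vector"
  assumes r: "0 < r" "r < 1"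
  shows "(norm (z - r *\<^sub>R (r *\<^sub>R z + sqrt (1 - r\<^sup>2) *\<^sub>R y)))\<^sup>2
    \<le> (1 + r) * (1 - r\<^sup>2)\<^sup>2 * (norm z)\<^sup>2 + (1 + r) * (1 - r\<^sup>2) * r * (norm y)\<^sup>2"
proof -
  define s where "s = sqrt (1 - r\<^sup>2)"
  have r2: "0 < 1 - r\<^sup>2" using r by (simp add: power_less_one_iff abs_square_less_1)
  have displacement: "z - r *\<^sub>R (r *\<^sub>R z + s *\<^sub>R y) = (1 - r\<^sup>2) *\<^sub>R z - (r * s) *\<^sub>R y"
    by (simp add: algebra_simps power2_eq_square)
  have "(norm (z - r *\<^sub>R (r *\<^sub>R z + s *\<^sub>R y)))\<^sup>2
      \<le> (1 + r) * (norm ((1 - r\<^sup>2) *\<^sub>R z))\<^sup>2 + (1 + 1 / r) * (norm ((r * s) *\<^sub>R y))\<^sup>2"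
    unfolding displacement by (rule power2_norm_diff_le[OF r(1)])
  also have "\<dots> = (1 + r) * (1 - r\<^sup>2)\<^sup>2 * (norm z)\<^sup>2 + (1 + 1 / r) * (r\<^sup>2 * (1 - r\<^sup>2)) * (norm y)\<^sup>2"
    using r r2 by (simp add: s_def power_mult_distrib)
  also have "(1 + 1 / r) * (r\<^sup>2 * (1 - r\<^sup>2)) = (1 + r) * (1 - r\<^sup>2) * r"
    using r by (simp add: field_simps power2_eq_square)
  finally show ?thesis by (simp add: s_def)
qed

lemma nn_integral_mehler_kernel_displacement_le:
  fixes z :: "'a::euclidean_space"
  assumes r: "0 < r" "r < 1"
  shows "(\<integral>\<^sup>+x. ennreal (mehler_kernel r z x * (norm (z - r *\<^sub>R x))\<^sup>2) \<partial>std_gaussian)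
     \<le> ennreal ((1 + r) * (1 - r\<^sup>2) * ((1 - r\<^sup>2) * (norm z)\<^sup>2 + r * DIM('a)))"
proof -
  have r2: "0 < 1 - r\<^sup>2" using r by (simp add: power_less_one_iff abs_square_less_1)
  define \<alpha> where "\<alpha> = (1 + r) * (1 - r\<^sup>2)\<^sup>2 * (norm z)\<^sup>2"
  define \<beta> where "\<beta> = (1 + r) * (1 - r\<^sup>2) * r"
  have \<alpha>: "0 \<le> \<alpha>" and \<beta>: "0 \<le> \<beta>" using r r2 by (simp_all add: \<alpha>_def \<beta>_def)
  have "(\<integral>\<^sup>+x. ennreal (mehler_kernel r z x * (norm (z - r *\<^sub>R x))\<^sup>2) \<partial>std_gaussian)
      = (\<integral>\<^sup>+y. ennreal ((norm (z - r *\<^sub>R (r *\<^sub>R z + sqrt (1 - r\<^sup>2) *\<^sub>R y)))\<^sup>2) \<partial>std_gaussian)"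
    by (subst nn_integral_mehler_formula[OF r]) (auto simp: ennreal_mult)
  also have "\<dots> \<le> (\<integral>\<^sup>+y. ennreal (\<alpha> + \<beta> * (norm (y::'a))\<^sup>2) \<partial>std_gaussian)"
    unfolding \<alpha>_def \<beta>_def by (intro nn_integral_mono ennreal_leI power2_norm_mehler_displacement_le[OF r])
  also have "\<dots> = (\<integral>\<^sup>+y. ennreal \<alpha> + ennreal \<beta> * ennreal ((norm (y::'a))\<^sup>2) \<partial>std_gaussian)"
    using \<alpha> \<beta> by (intro nn_integral_cong) (simp add: ennreal_plus ennreal_mult)
  also have "\<dots> = ennreal \<alpha> + ennreal \<beta> * DIM('a)"
    by (subst nn_integral_add) (auto simp: nn_integral_cmult nn_integral_std_gaussian_norm_sq)
  also have "\<dots> = ennreal (\<alpha> + \<beta> * DIM('a))"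
    using \<alpha> \<beta> by (simp add: ennreal_plus ennreal_mult ennreal_of_nat_eq_real_of_nat)
  also have "\<alpha> + \<beta> * DIM('a) = (1 + r) * (1 - r\<^sup>2) * ((1 - r\<^sup>2) * (norm z)\<^sup>2 + r * DIM('a))"
    by (simp add: \<alpha>_def \<beta>_def algebra_simps power2_eq_square)
  finally show ?thesis .
qed

section \<open>The Mehler transform of a weight\<close>

locale second_moment_weight =
  fixes f :: "'a::euclidean_space \<Rightarrow> real"
  assumes measurable_f [measurable]: "f \<in> borel_measurable borel"
    and f_nonneg: "\<And>x. 0 \<le> f x"
    and integrable_f: "integrable std_gaussian f"
    and integrable_second_moment: "integrable std_gaussian (\<lambda>x. (norm x)\<^sup>2 * f x)"
begin

text \<open>For \<open>r = e\<^sup>-\<^sup>t\<close>, \<open>mehler r\<close> is \<open>P\<^sub>t f\<close> and \<open>mehler_moment1 r\<close>, \<open>mehler_moment2 r\<close> are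
  the moments \<open>B\<^sub>r\<close>, \<open>C\<^sub>r\<close>.\<close>

definition mehler :: "real \<Rightarrow> 'a \<Rightarrow> real" where
  "mehler r x = (\<integral>z. f z * mehler_kernel r x z \<partial>std_gaussian)"

definition mehler_moment1 :: "real \<Rightarrow> 'a \<Rightarrow> 'a" where
  "mehler_moment1 r x = (\<integral>z. (f z * mehler_kernel r x z) *\<^sub>R (z - r *\<^sub>R x) \<partial>std_gaussian)"

definition mehler_moment2 :: "real \<Rightarrow> 'a \<Rightarrow> real" where
  "mehler_moment2 r x = (\<integral>z. f z * mehler_kernel r x z * (norm (z - r *\<^sub>R x))\<^sup>2 \<partial>std_gaussian)"

definition second_moment :: real where
  "second_moment = (\<integral>z. (norm z)\<^sup>2 * f z \<partial>std_gaussian)"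

lemma second_moment_nonneg: "0 \<le> second_moment"
  unfolding second_moment_def by (intro integral_nonneg_AE AE_I2) (simp add: f_nonneg)

lemma measurable_mehler [measurable]: "mehler r \<in> borel_measurable borel"
  unfolding mehler_def[abs_def]
  by (rule sigma_finite_measure.borel_measurable_lebesgue_integral[OF sigma_finite_std_gaussian]) measurable

lemma measurable_mehler_moment1 [measurable]: "mehler_moment1 r \<in> borel_measurable borel"
  unfolding mehler_moment1_def[abs_def]
  by (rule sigma_finite_measure.borel_measurable_lebesgue_integral[OF sigma_finite_std_gaussian]) measurable

lemma measurable_mehler_moment2 [measurable]: "mehler_moment2 r \<in> borel_measurable borel"
  unfolding mehler_moment2_def[abs_def]
  by (rule sigma_finite_measure.borel_measurable_lebesgue_integral[OF sigma_finite_std_gaussian]) measurable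

lemma integrable_weight_bound:
  fixes F :: "'a \<Rightarrow> 'b::{banach, second_countable_topology}"
  assumes [measurable]: "F \<in> borel_measurable borel"
    and bound: "\<And>z. norm (F z) \<le> C * (f z * (1 + (norm z)\<^sup>2))"
  shows "integrable std_gaussian F"
proof (rule Bochner_Integration.integrable_bound)
  show "integrable std_gaussian (\<lambda>z. C * (f z * (1 + (norm z)\<^sup>2)))"
    using integrable_f integrable_second_moment by (simp add: algebra_simps)
  show "AE z in std_gaussian. norm (F z) \<le> norm (C * (f z * (1 + (norm z)\<^sup>2)))"
    using bound by (intro AE_I2) (metis abs_ge_self order_trans real_norm_def)
qed measurable

lemma tendsto_integral_weight_bound:
  fixes F :: "nat \<Rightarrow> 'a \<Rightarrow> 'b::{banach, second_countable_topology}"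
  assumes [measurable]: "\<And>n. F n \<in> borel_measurable borel" "F0 \<in> borel_measurable borel"
    and bound: "\<And>n z. norm (F n z) \<le> C * (f z * (1 + (norm z)\<^sup>2))"
    and lim: "\<And>z. (\<lambda>n. F n z) \<longlonglongrightarrow> F0 z"
  shows "(\<lambda>n. \<integral>z. F n z \<partial>std_gaussian) \<longlonglongrightarrow> (\<integral>z. F0 z \<partial>std_gaussian)"
proof (rule integral_dominated_convergence[where w="\<lambda>z. C * (f z * (1 + (norm z)\<^sup>2))"])
  show "integrable std_gaussian (\<lambda>z. C * (f z * (1 + (norm z)\<^sup>2)))"
    using integrable_f integrable_second_moment by (simp add: algebra_simps)
qed (use bound lim in simp_all)

lemma mehler_integrands_le:
  fixes x z :: 'a
  assumes r: "\<bar>r\<bar> \<le> s" "s < 1"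
  defines "K \<equiv> (1 - s\<^sup>2) powr (- real DIM('a) / 2) * exp ((norm x)\<^sup>2 / 2) * (2 * (1 + (norm x)\<^sup>2))"
  shows "norm (f z * mehler_kernel r x z) \<le> K * (f z * (1 + (norm z)\<^sup>2))"
    and "norm ((f z * mehler_kernel r x z) *\<^sub>R (z - r *\<^sub>R x)) \<le> K * (f z * (1 + (norm z)\<^sup>2))"
    and "norm (f z * mehler_kernel r x z * (norm (z - r *\<^sub>R x))\<^sup>2) \<le> K * (f z * (1 + (norm z)\<^sup>2))"
proof -
  define \<delta> where "\<delta> = norm (z - r *\<^sub>R x)"
  define w where "w = f z * mehler_kernel r x z"
  have w: "0 \<le> w" by (simp add: w_def f_nonneg)
  have "w * (1 + \<delta>\<^sup>2) \<le> K * (f z * (1 + (norm z)\<^sup>2))"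
    using mult_left_mono[OF mehler_kernel_moment_le[OF r, of x z] f_nonneg[of z]]
    by (simp add: K_def w_def \<delta>_def mult_ac)
  moreover have "\<delta> \<le> 1 + \<delta>\<^sup>2"
  proof -
    have "0 \<le> \<delta>\<^sup>2 + 1 - 2 * \<delta>"
      using zero_le_power2[of "\<delta> - 1"] unfolding power2_diff by simp
    then show ?thesis using zero_le_power2[of \<delta>] by linarith
  qed
  ultimately have bound: "w * t \<le> K * (f z * (1 + (norm z)\<^sup>2))" if "t \<in> {1, \<delta>, \<delta>\<^sup>2}" for t
    using that w by (smt (verit, best) empty_iff insert_iff mult_left_mono zero_le_power2)
  show "norm (f z * mehler_kernel r x z) \<le> K * (f z * (1 + (norm z)\<^sup>2))"
    using bound[of 1] w by (simp add: w_def)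
  show "norm ((f z * mehler_kernel r x z) *\<^sub>R (z - r *\<^sub>R x)) \<le> K * (f z * (1 + (norm z)\<^sup>2))"
    using bound[of \<delta>] w by (simp add: w_def \<delta>_def)
  show "norm (f z * mehler_kernel r x z * (norm (z - r *\<^sub>R x))\<^sup>2) \<le> K * (f z * (1 + (norm z)\<^sup>2))"
    using bound[of "\<delta>\<^sup>2"] w by (simp add: w_def \<delta>_def)
qed

lemma
  assumes "\<bar>r\<bar> < 1"
  shows integrable_mehler: "integrable std_gaussian (\<lambda>z. f z * mehler_kernel r x z)"
    and integrable_mehler_moment1:
      "integrable std_gaussian (\<lambda>z. (f z * mehler_kernel r x z) *\<^sub>R (z - r *\<^sub>R x))"
    and integrable_mehler_moment2:
      "integrable std_gaussian (\<lambda>z. f z * mehler_kernel r x z * (norm (z - r *\<^sub>R x))\<^sup>2)"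
proof -
  have r: "\<bar>r\<bar> \<le> \<bar>r\<bar>" "\<bar>r\<bar> < 1" using assms by simp_all
  show "integrable std_gaussian (\<lambda>z. f z * mehler_kernel r x z)"
    by (rule integrable_weight_bound[OF _ mehler_integrands_le(1)[OF r]]) measurable
  show "integrable std_gaussian (\<lambda>z. (f z * mehler_kernel r x z) *\<^sub>R (z - r *\<^sub>R x))"
    by (rule integrable_weight_bound[OF _ mehler_integrands_le(2)[OF r]]) measurable
  show "integrable std_gaussian (\<lambda>z. f z * mehler_kernel r x z * (norm (z - r *\<^sub>R x))\<^sup>2)"
    by (rule integrable_weight_bound[OF _ mehler_integrands_le(3)[OF r]]) measurable
qed

lemma
  assumes rs: "rs \<longlonglongrightarrow> 0" "\<And>n. \<bar>rs n\<bar> \<le> 1 / 2"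
  shows tendsto_mehler: "(\<lambda>n. mehler (rs n) x) \<longlonglongrightarrow> (\<integral>z. f z \<partial>std_gaussian)"
    and tendsto_mehler_moment1: "(\<lambda>n. mehler_moment1 (rs n) x) \<longlonglongrightarrow> (\<integral>z. f z *\<^sub>R z \<partial>std_gaussian)"
    and tendsto_mehler_moment2: "(\<lambda>n. mehler_moment2 (rs n) x) \<longlonglongrightarrow> second_moment"
proof -
  have kernel: "(\<lambda>n. mehler_kernel (rs n) x z) \<longlonglongrightarrow> 1" for z
    by (rule tendsto_mehler_kernel[OF rs(1)])
  have r: "\<bar>rs n\<bar> \<le> 1 / 2" "(1 / 2 :: real) < 1" for n
    using rs(2) by simp_all
  show "(\<lambda>n. mehler (rs n) x) \<longlonglongrightarrow> (\<integral>z. f z \<partial>std_gaussian)"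
    unfolding mehler_def
  proof (rule tendsto_integral_weight_bound)
    show "(\<lambda>n. f z * mehler_kernel (rs n) x z) \<longlonglongrightarrow> f z" for z
      using tendsto_mult[OF tendsto_const kernel] by simp
  qed (rule mehler_integrands_le(1)[OF r] | simp)+
  show "(\<lambda>n. mehler_moment1 (rs n) x) \<longlonglongrightarrow> (\<integral>z. f z *\<^sub>R z \<partial>std_gaussian)"
    unfolding mehler_moment1_def
  proof (rule tendsto_integral_weight_bound)
    show "(\<lambda>n. (f z * mehler_kernel (rs n) x z) *\<^sub>R (z - rs n *\<^sub>R x)) \<longlonglongrightarrow> f z *\<^sub>R z" for z
    proof -
      have "(\<lambda>n. (f z * mehler_kernel (rs n) x z) *\<^sub>R (z - rs n *\<^sub>R x)) \<longlonglongrightarrow> (f z * 1) *\<^sub>R (z - 0 *\<^sub>R x)"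
        by (intro tendsto_intros kernel rs(1))
      then show ?thesis by simp
    qed
  qed (rule mehler_integrands_le(2)[OF r] | simp)+
  show "(\<lambda>n. mehler_moment2 (rs n) x) \<longlonglongrightarrow> second_moment"
    unfolding mehler_moment2_def second_moment_def
  proof (rule tendsto_integral_weight_bound)
    show "(\<lambda>n. f z * mehler_kernel (rs n) x z * (norm (z - rs n *\<^sub>R x))\<^sup>2) \<longlonglongrightarrow> (norm z)\<^sup>2 * f z" for z
    proof -
      have "(\<lambda>n. f z * mehler_kernel (rs n) x z * (norm (z - rs n *\<^sub>R x))\<^sup>2)
          \<longlonglongrightarrow> f z * 1 * (norm (z - 0 *\<^sub>R x))\<^sup>2"
        by (intro tendsto_intros kernel rs(1))
      then show ?thesis by (simp add: mult.commute)
    qed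
  qed (rule mehler_integrands_le(3)[OF r] | simp)+
qed

lemma OU_eq_mehler:
  assumes "0 < t"
  shows "OU t f x = mehler (exp (- t)) x"
proof -
  define r where "r = exp (- t)"
  have r: "0 < r" "r < 1" using assms by (auto simp: r_def)
  have "exp (- 2 * t) = r\<^sup>2" by (simp add: r_def power2_eq_square exp_add[symmetric])
  then have "OU t f x = (\<integral>y. f (r *\<^sub>R x + sqrt (1 - r\<^sup>2) *\<^sub>R y) \<partial>std_gaussian)"
    unfolding OU_def r_def by simp
  also have "\<dots> = enn2real (\<integral>\<^sup>+y. ennreal (f (r *\<^sub>R x + sqrt (1 - r\<^sup>2) *\<^sub>R y)) \<partial>std_gaussian)"
    by (rule integral_eq_nn_integral) (auto simp: f_nonneg)
  also have "\<dots> = enn2real (\<integral>\<^sup>+z. ennreal (f z * mehler_kernel r x z) \<partial>std_gaussian)"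
    by (subst nn_integral_mehler_formula[OF r]) (auto simp: ennreal_mult[symmetric] f_nonneg mult.commute)
  also have "\<dots> = mehler r x"
    unfolding mehler_def by (rule integral_eq_nn_integral[symmetric]) (auto simp: f_nonneg)
  finally show ?thesis by (simp add: r_def)
qed

lemma
  fixes x h :: 'a
  assumes r: "\<bar>r\<bar> < 1"
  defines "R \<equiv> \<lambda>z. mehler_kernel r (x + h) z - mehler_kernel r x z
    - mehler_kernel r x z * (r / (1 - r\<^sup>2) * (h \<bullet> (z - r *\<^sub>R x)))"
  shows mehler_remainder_eq: "mehler r (x + h) - mehler r x - h \<bullet> ((r / (1 - r\<^sup>2)) *\<^sub>R mehler_moment1 r x)
      = (\<integral>z. f z * R z \<partial>std_gaussian)"
    and integrable_mehler_remainder: "integrable std_gaussian (\<lambda>z. f z * R z)"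
proof -
  define F1 where "F1 z = f z * mehler_kernel r (x + h) z" for z
  define F2 where "F2 z = f z * mehler_kernel r x z" for z
  define F3 where "F3 z = r / (1 - r\<^sup>2) * (h \<bullet> ((f z * mehler_kernel r x z) *\<^sub>R (z - r *\<^sub>R x)))" for z
  have i1: "integrable std_gaussian F1" unfolding F1_def by (rule integrable_mehler[OF r])
  have i2: "integrable std_gaussian F2" unfolding F2_def by (rule integrable_mehler[OF r])
  have i3: "integrable std_gaussian F3"
    unfolding F3_def by (intro integrable_mult_right integrable_inner_right integrable_mehler_moment1[OF r])
  have "(\<integral>z. F3 z \<partial>std_gaussian)
      = r / (1 - r\<^sup>2) * (\<integral>z. h \<bullet> ((f z * mehler_kernel r x z) *\<^sub>R (z - r *\<^sub>R x)) \<partial>std_gaussian)"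
    unfolding F3_def by (rule integral_mult_right_zero)
  also have "(\<integral>z. h \<bullet> ((f z * mehler_kernel r x z) *\<^sub>R (z - r *\<^sub>R x)) \<partial>std_gaussian) = h \<bullet> mehler_moment1 r x"
    unfolding mehler_moment1_def by (rule integral_inner_right) (rule integrable_mehler_moment1[OF r])
  finally have F3: "(\<integral>z. F3 z \<partial>std_gaussian) = h \<bullet> ((r / (1 - r\<^sup>2)) *\<^sub>R mehler_moment1 r x)"
    by simp
  have remainder: "F1 z - F2 z - F3 z = f z * R z" for z
    by (simp add: F1_def F2_def F3_def R_def algebra_simps diff_divide_distrib)
  then show "mehler r (x + h) - mehler r x - h \<bullet> ((r / (1 - r\<^sup>2)) *\<^sub>R mehler_moment1 r x)
      = (\<integral>z. f z * R z \<partial>std_gaussian)"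
    unfolding F3[symmetric] mehler_def F1_def[symmetric] F2_def[symmetric]
    using i1 i2 i3 by (simp flip: Bochner_Integration.integral_diff)
  have "integrable std_gaussian (\<lambda>z. F1 z - F2 z - F3 z)"
    using i1 i2 i3 by simp
  then show "integrable std_gaussian (\<lambda>z. f z * R z)"
    by (simp only: remainder)
qed

lemma mehler_taylor:
  assumes r: "0 < r" "r < 1"
  obtains C where "\<And>h. norm h \<le> 1 \<Longrightarrow>
    \<bar>mehler r (x + h) - mehler r x - h \<bullet> ((r / (1 - r\<^sup>2)) *\<^sub>R mehler_moment1 r x)\<bar> \<le> C * (norm h)\<^sup>2"
proof -
  have r1: "\<bar>r\<bar> < 1" using r by simp
  obtain C where C: "\<And>z h. norm h \<le> 1 \<Longrightarrow>
    \<bar>mehler_kernel r (x + h) z - mehler_kernel r x z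
       - mehler_kernel r x z * (r / (1 - r\<^sup>2) * (h \<bullet> (z - r *\<^sub>R x)))\<bar> \<le> C * (norm h)\<^sup>2"
    using mehler_kernel_taylor[OF r] by blast
  show ?thesis
  proof (rule that[of "C * (\<integral>z. f z \<partial>std_gaussian)"])
    fix h :: 'a assume h: "norm h \<le> 1"
    have "\<bar>mehler r (x + h) - mehler r x - h \<bullet> ((r / (1 - r\<^sup>2)) *\<^sub>R mehler_moment1 r x)\<bar>
        \<le> (\<integral>z. C * (norm h)\<^sup>2 * f z \<partial>std_gaussian)"
      unfolding mehler_remainder_eq[OF r1]
    proof (rule integral_abs_bound_integral[OF integrable_mehler_remainder[OF r1]])
      show "integrable std_gaussian (\<lambda>z. C * (norm h)\<^sup>2 * f z)"
        using integrable_f by simp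
      show "\<bar>f z * (mehler_kernel r (x + h) z - mehler_kernel r x z
          - mehler_kernel r x z * (r / (1 - r\<^sup>2) * (h \<bullet> (z - r *\<^sub>R x))))\<bar> \<le> C * (norm h)\<^sup>2 * f z" for z
        using mult_left_mono[OF C[OF h, of z] f_nonneg[of z]] f_nonneg[of z]
        by (simp add: abs_mult mult_ac)
    qed
    then show "\<bar>mehler r (x + h) - mehler r x - h \<bullet> ((r / (1 - r\<^sup>2)) *\<^sub>R mehler_moment1 r x)\<bar>
        \<le> C * (\<integral>z. f z \<partial>std_gaussian) * (norm h)\<^sup>2"
      by (simp add: mult_ac)
  qed
qed

lemma has_derivative_mehler:
  assumes "0 < r" "r < 1"
  shows "(mehler r has_derivative (\<lambda>h. h \<bullet> ((r / (1 - r\<^sup>2)) *\<^sub>R mehler_moment1 r x))) (at x)"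
proof -
  obtain C where "\<And>h. norm h \<le> 1 \<Longrightarrow>
      \<bar>mehler r (x + h) - mehler r x - h \<bullet> ((r / (1 - r\<^sup>2)) *\<^sub>R mehler_moment1 r x)\<bar> \<le> C * (norm h)\<^sup>2"
    using mehler_taylor[OF assms] by blast
  then show ?thesis
    by (intro has_derivative_quadratic_remainder bounded_linear_inner_left) auto
qed

lemma grad_mehler:
  assumes "0 < r" "r < 1"
  shows "grad (mehler r) x = (r / (1 - r\<^sup>2)) *\<^sub>R mehler_moment1 r x"
proof -
  define V where "V = (r / (1 - r\<^sup>2)) *\<^sub>R mehler_moment1 r x"
  have "frechet_derivative (mehler r) (at x) = (\<lambda>h. h \<bullet> V)"
    unfolding V_def by (rule frechet_derivative_at[OF has_derivative_mehler[OF assms], symmetric])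
  then have "grad (mehler r) x = V"
    by (simp add: grad_def inner_commute[of _ V] euclidean_representation)
  then show ?thesis
    by (simp add: V_def)
qed

lemma mehler_nonneg: "0 \<le> mehler r x"
  unfolding mehler_def by (intro integral_nonneg_AE AE_I2) (simp add: f_nonneg)

lemma mehler_moment2_nonneg: "0 \<le> mehler_moment2 r x"
  unfolding mehler_moment2_def by (intro integral_nonneg_AE AE_I2) (simp add: f_nonneg)

lemma mehler_moment1_norm_sq_le:
  assumes "\<bar>r\<bar> < 1"
  shows "(norm (mehler_moment1 r x))\<^sup>2 \<le> mehler r x * mehler_moment2 r x"
  unfolding mehler_def mehler_moment1_def mehler_moment2_def
  using integrable_mehler[OF assms] integrable_mehler_moment1[OF assms] integrable_mehler_moment2[OF assms]
  by (intro integral_weighted_Cauchy_Schwarz) (simp_all add: f_nonneg)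

lemma nn_integral_mehler_moment2_eq:
  assumes r: "\<bar>r\<bar> < 1"
  shows "(\<integral>\<^sup>+x. mehler_moment2 r x \<partial>std_gaussian) = (\<integral>\<^sup>+z. ennreal (f z) *
    (\<integral>\<^sup>+x. ennreal (mehler_kernel r z x * (norm (z - r *\<^sub>R x))\<^sup>2) \<partial>std_gaussian) \<partial>std_gaussian)"
proof -
  define F where "F x z = ennreal (f z * mehler_kernel r x z * (norm (z - r *\<^sub>R x))\<^sup>2)" for x z :: 'a
  have [measurable]: "case_prod F \<in> borel_measurable (std_gaussian \<Otimes>\<^sub>M std_gaussian)"
    unfolding F_def by measurable
  have "(\<integral>\<^sup>+x. mehler_moment2 r x \<partial>std_gaussian) = (\<integral>\<^sup>+x. (\<integral>\<^sup>+z. F x z \<partial>std_gaussian) \<partial>std_gaussian)"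
    unfolding mehler_moment2_def F_def
    by (intro nn_integral_cong nn_integral_eq_integral[symmetric] integrable_mehler_moment2[OF r])
      (simp add: f_nonneg)
  also have "\<dots> = (\<integral>\<^sup>+z. (\<integral>\<^sup>+x. F x z \<partial>std_gaussian) \<partial>std_gaussian)"
    by (rule pair_sigma_finite.Fubini'[symmetric])
      (simp_all add: pair_sigma_finite_def sigma_finite_std_gaussian)
  also have "\<dots> = (\<integral>\<^sup>+z. ennreal (f z) *
      (\<integral>\<^sup>+x. ennreal (mehler_kernel r z x * (norm (z - r *\<^sub>R x))\<^sup>2) \<partial>std_gaussian) \<partial>std_gaussian)"
    unfolding F_def
    by (intro nn_integral_cong, subst nn_integral_cmult[symmetric])
      (simp_all add: ennreal_mult[symmetric] f_nonneg mehler_kernel_commute mult.assoc)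
  finally show ?thesis .
qed

lemma nn_integral_mehler_moment2_le:
  assumes r: "0 < r" "r < 1"
  shows "(\<integral>\<^sup>+x. mehler_moment2 r x \<partial>std_gaussian)
    \<le> ennreal ((1 + r) * (1 - r\<^sup>2) * ((1 - r\<^sup>2) * second_moment + r * DIM('a) * (\<integral>z. f z \<partial>std_gaussian)))"
proof -
  have r1: "\<bar>r\<bar> < 1" using r by simp
  define P where "P z = (1 + r) * (1 - r\<^sup>2) * ((1 - r\<^sup>2) * (norm z)\<^sup>2 + r * DIM('a))" for z :: 'a
  have P: "0 \<le> P z" for z
    using r by (simp add: P_def abs_square_less_1 less_imp_le)
  define \<alpha> where "\<alpha> = (1 + r) * (1 - r\<^sup>2)\<^sup>2"
  define \<beta> where "\<beta> = (1 + r) * (1 - r\<^sup>2) * r * DIM('a)"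
  have fP: "f z * P z = \<alpha> * ((norm z)\<^sup>2 * f z) + \<beta> * f z" for z
    by (simp add: P_def \<alpha>_def \<beta>_def algebra_simps power2_eq_square)
  have "(\<integral>\<^sup>+x. mehler_moment2 r x \<partial>std_gaussian) \<le> (\<integral>\<^sup>+z. ennreal (f z) * ennreal (P z) \<partial>std_gaussian)"
    unfolding nn_integral_mehler_moment2_eq[OF r1] using r
    by (intro nn_integral_mono mult_left_mono) (simp_all add: P_def nn_integral_mehler_kernel_displacement_le)
  also have "\<dots> = ennreal (\<integral>z. f z * P z \<partial>std_gaussian)"
  proof (subst nn_integral_eq_integral[symmetric])
    show "integrable std_gaussian (\<lambda>z. f z * P z)"
      unfolding fP using integrable_f integrable_second_moment by simp
  qed (simp_all add: f_nonneg P ennreal_mult)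
  also have "(\<integral>z. f z * P z \<partial>std_gaussian) = \<alpha> * second_moment + \<beta> * (\<integral>z. f z \<partial>std_gaussian)"
    unfolding fP second_moment_def using integrable_f integrable_second_moment by simp
  also have "\<alpha> * second_moment + \<beta> * (\<integral>z. f z \<partial>std_gaussian)
      = (1 + r) * (1 - r\<^sup>2) * ((1 - r\<^sup>2) * second_moment + r * DIM('a) * (\<integral>z. f z \<partial>std_gaussian))"
    by (simp add: \<alpha>_def \<beta>_def algebra_simps power2_eq_square)
  finally show ?thesis .
qed

lemma nn_integral_scaled_mehler_moment2_le:
  assumes r: "0 < r" "r < 1"
  shows "(\<integral>\<^sup>+x. mehler_moment2 r x / (1 - r\<^sup>2)\<^sup>2 \<partial>std_gaussian)
    \<le> ennreal ((1 + r) * (second_moment + r * DIM('a) * (\<integral>z. f z \<partial>std_gaussian) / (1 - r\<^sup>2)))"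
proof -
  have s: "1 - r\<^sup>2 \<noteq> 0" using r by (simp add: abs_square_eq_1)
  have identity: "1 / q\<^sup>2 * ((1 + \<rho>) * q * (q * m + \<rho> * d * e)) = (1 + \<rho>) * (m + \<rho> * d * e / q)"
    if "q \<noteq> 0" for q \<rho> m d e :: real
    using that by (simp add: field_simps power2_eq_square)
  have "(\<integral>\<^sup>+x. mehler_moment2 r x / (1 - r\<^sup>2)\<^sup>2 \<partial>std_gaussian)
      = ennreal (1 / (1 - r\<^sup>2)\<^sup>2) * (\<integral>\<^sup>+x. mehler_moment2 r x \<partial>std_gaussian)"
    by (subst nn_integral_cmult[symmetric]) (simp_all add: ennreal_mult[symmetric] mehler_moment2_nonneg)
  also have "\<dots> \<le> ennreal (1 / (1 - r\<^sup>2)\<^sup>2) * ennreal ((1 + r) * (1 - r\<^sup>2) *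
      ((1 - r\<^sup>2) * second_moment + r * DIM('a) * (\<integral>z. f z \<partial>std_gaussian)))"
    by (intro mult_left_mono nn_integral_mehler_moment2_le r) simp
  also have "\<dots> = ennreal (1 / (1 - r\<^sup>2)\<^sup>2 * ((1 + r) * (1 - r\<^sup>2) *
      ((1 - r\<^sup>2) * second_moment + r * DIM('a) * (\<integral>z. f z \<partial>std_gaussian))))"
    by (rule ennreal_mult'[symmetric]) simp
  also have "\<dots> = ennreal ((1 + r) * (second_moment + r * DIM('a) * (\<integral>z. f z \<partial>std_gaussian) / (1 - r\<^sup>2)))"
    unfolding identity[OF s] ..
  finally show ?thesis .
qed

section \<open>Decay of the Fisher information\<close>

definition scaled_fisher_density :: "real \<Rightarrow> 'a \<Rightarrow> real" where
  "scaled_fisher_density r x = (norm (mehler_moment1 r x))\<^sup>2 / ((1 - r\<^sup>2)\<^sup>2 * mehler r x)"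

lemma measurable_scaled_fisher_density [measurable]: "scaled_fisher_density r \<in> borel_measurable borel"
  unfolding scaled_fisher_density_def[abs_def] by measurable

lemma scaled_fisher_density_nonneg: "0 \<le> scaled_fisher_density r x"
  unfolding scaled_fisher_density_def using mehler_nonneg[of r x] by simp

lemma scaled_fisher_density_le:
  assumes "\<bar>r\<bar> < 1"
  shows "scaled_fisher_density r x \<le> mehler_moment2 r x / (1 - r\<^sup>2)\<^sup>2"
proof (cases "mehler r x = 0")
  case False
  then have "0 < mehler r x" using mehler_nonneg[of r x] by simp
  then show ?thesis
    using mehler_moment1_norm_sq_le[OF assms, of x]
    by (simp add: scaled_fisher_density_def divide_right_mono pos_divide_le_eq mult.commute
        flip: divide_divide_eq_left)
qed (simp add: scaled_fisher_density_def mehler_moment2_nonneg)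

lemma exp_fisher_OU_eq:
  assumes "0 < t"
  shows "ennreal (exp (2 * t)) * fisher (OU t f) = (\<integral>\<^sup>+x. scaled_fisher_density (exp (- t)) x \<partial>std_gaussian)"
proof -
  define r where "r = exp (- t)"
  have r: "0 < r" "r < 1" using assms by (auto simp: r_def)
  have "OU t f = mehler r" using OU_eq_mehler[OF assms] by (auto simp: r_def)
  then have "ennreal (exp (2 * t)) * fisher (OU t f)
      = (\<integral>\<^sup>+x. ennreal (exp (2 * t)) * ennreal ((norm ((r / (1 - r\<^sup>2)) *\<^sub>R mehler_moment1 r x))\<^sup>2 / mehler r x) \<partial>std_gaussian)"
    unfolding fisher_def using grad_mehler[OF r] by (simp add: nn_integral_cmult)
  also have "\<dots> = (\<integral>\<^sup>+x. scaled_fisher_density r x \<partial>std_gaussian)"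
  proof (intro nn_integral_cong)
    fix x
    have "exp (2 * t) * r\<^sup>2 = 1" by (simp add: r_def power2_eq_square exp_add[symmetric])
    then have "exp (2 * t) * ((norm ((r / (1 - r\<^sup>2)) *\<^sub>R mehler_moment1 r x))\<^sup>2 / mehler r x)
        = scaled_fisher_density r x"
      using r by (simp add: scaled_fisher_density_def power_mult_distrib power_divide field_simps)
    then show "ennreal (exp (2 * t)) * ennreal ((norm ((r / (1 - r\<^sup>2)) *\<^sub>R mehler_moment1 r x))\<^sup>2 / mehler r x)
        = ennreal (scaled_fisher_density r x)"
      by (simp add: ennreal_mult'[symmetric])
  qed
  finally show ?thesis by (simp add: r_def)
qed

lemma tendsto_scaled_fisher_density:
  assumes mass: "(\<integral>x. f x \<partial>std_gaussian) \<noteq> 0" and centered: "(\<integral>x. f x *\<^sub>R x \<partial>std_gaussian) = 0"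
    and rs: "rs \<longlonglongrightarrow> 0" "\<And>n. \<bar>rs n\<bar> \<le> 1 / 2"
  shows "(\<lambda>n. scaled_fisher_density (rs n) x) \<longlonglongrightarrow> 0"
proof -
  have "(\<lambda>n. scaled_fisher_density (rs n) x)
      \<longlonglongrightarrow> (norm (\<integral>z. f z *\<^sub>R z \<partial>std_gaussian))\<^sup>2 / ((1 - 0\<^sup>2)\<^sup>2 * (\<integral>z. f z \<partial>std_gaussian))"
    unfolding scaled_fisher_density_def using mass
    by (intro tendsto_intros tendsto_mehler tendsto_mehler_moment1 rs) simp
  then show ?thesis
    by (simp add: centered)
qed

lemma tendsto_scaled_mehler_moment2:
  assumes rs: "rs \<longlonglongrightarrow> 0" "\<And>n. \<bar>rs n\<bar> \<le> 1 / 2"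
  shows "(\<lambda>n. mehler_moment2 (rs n) x / (1 - (rs n)\<^sup>2)\<^sup>2) \<longlonglongrightarrow> second_moment"
proof -
  have "(\<lambda>n. mehler_moment2 (rs n) x / (1 - (rs n)\<^sup>2)\<^sup>2) \<longlonglongrightarrow> second_moment / (1 - 0\<^sup>2)\<^sup>2"
    by (intro tendsto_intros tendsto_mehler_moment2 rs) simp
  then show ?thesis by simp
qed

lemma tendsto_scaled_fisher_0:
  assumes mass: "(\<integral>x. f x \<partial>std_gaussian) \<noteq> 0" and centered: "(\<integral>x. f x *\<^sub>R x \<partial>std_gaussian) = 0"
  shows "((\<lambda>r. \<integral>\<^sup>+x. scaled_fisher_density r x \<partial>std_gaussian) \<longlongrightarrow> 0) (at_right 0)"
proof (rule tendsto_at_right_sequentially[of 0 "1 / 2"])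
  fix rs :: "nat \<Rightarrow> real"
  assume rs_pos: "\<And>n. 0 < rs n" and rs_le: "\<And>n. rs n < 1 / 2" and "decseq rs" and rs: "rs \<longlonglongrightarrow> 0"
  interpret prob_space "std_gaussian :: 'a measure" by (rule prob_space_std_gaussian)
  define D where "D n x = mehler_moment2 (rs n) x / (1 - (rs n)\<^sup>2)\<^sup>2" for n x
  define U where "U n = (1 + rs n) * (second_moment
    + rs n * DIM('a) * (\<integral>z. f z \<partial>std_gaussian) / (1 - (rs n)\<^sup>2))" for n
  have r: "\<bar>rs n\<bar> \<le> 1 / 2" "\<bar>rs n\<bar> < 1" "0 < rs n" "rs n < 1" for n
    using rs_pos[of n] rs_le[of n] by auto
  have D_nonneg: "0 \<le> D n x" for n x
    by (simp add: D_def mehler_moment2_nonneg)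
  have nn_integral_D: "(\<integral>\<^sup>+x. D n x \<partial>std_gaussian) \<le> ennreal (U n)" for n
    unfolding D_def U_def by (rule nn_integral_scaled_mehler_moment2_le[OF r(3,4)])
  have "U \<longlonglongrightarrow> (1 + 0) * (second_moment + 0 * DIM('a) * (\<integral>z. f z \<partial>std_gaussian) / (1 - 0\<^sup>2))"
    unfolding U_def by (intro tendsto_intros) (simp_all add: rs)
  then have "limsup (\<lambda>n. ennreal (U n)) = ennreal second_moment"
    by (intro lim_imp_Limsup) (simp_all add: tendsto_ennrealI)
  moreover have "limsup (\<lambda>n. \<integral>\<^sup>+x. norm (D n x) \<partial>std_gaussian) \<le> limsup (\<lambda>n. ennreal (U n))"
    using nn_integral_D D_nonneg by (intro Limsup_mono always_eventually) simp
  ultimately have limsup: "limsup (\<lambda>n. \<integral>\<^sup>+x. norm (D n x) \<partial>std_gaussian)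
      \<le> (\<integral>\<^sup>+x. norm second_moment \<partial>std_gaussian)"
    using second_moment_nonneg by simp
  show "(\<lambda>n. \<integral>\<^sup>+x. scaled_fisher_density (rs n) x \<partial>std_gaussian) \<longlonglongrightarrow> 0"
  proof (rule Pratt_lemma_tendsto_0[where D=D and Dl="\<lambda>_. second_moment", OF _ _ _ _ _ _ _ limsup])
    show "integrable std_gaussian (D n)" for n
    proof (rule integrableI_bounded)
      show "(\<integral>\<^sup>+x. ennreal (norm (D n x)) \<partial>std_gaussian) < \<infinity>"
        using nn_integral_D[of n] D_nonneg by (simp add: le_less_trans)
    qed (unfold D_def, measurable)
    show "scaled_fisher_density (rs n) x \<le> D n x" for n x
      unfolding D_def by (rule scaled_fisher_density_le[OF r(2)])
    show "AE x in std_gaussian. (\<lambda>n. scaled_fisher_density (rs n) x) \<longlonglongrightarrow> 0"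
      using tendsto_scaled_fisher_density[OF mass centered rs r(1)] by simp
    show "AE x in std_gaussian. (\<lambda>n. D n x) \<longlonglongrightarrow> second_moment"
      unfolding D_def using tendsto_scaled_mehler_moment2[OF rs r(1)] by simp
  qed (simp_all add: scaled_fisher_density_nonneg)
qed simp

lemma exp_fisher_OU_tendsto_0:
  assumes "(\<integral>x. f x \<partial>std_gaussian) \<noteq> 0" and "(\<integral>x. f x *\<^sub>R x \<partial>std_gaussian) = 0"
  shows "((\<lambda>t. ennreal (exp (2 * t)) * fisher (OU t f)) \<longlongrightarrow> 0) at_top"
proof -
  have "((\<lambda>t. exp (- t)) \<longlongrightarrow> (0 :: real)) at_top"
    using filterlim_compose[OF exp_at_bot filterlim_uminus_at_bot_at_top] by simp
  then have "filterlim (\<lambda>t::real. exp (- t)) (at_right 0) at_top"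
    by (rule tendsto_imp_filterlim_at_right) simp
  from filterlim_compose[OF tendsto_scaled_fisher_0[OF assms] this]
  have "((\<lambda>t. \<integral>\<^sup>+x. scaled_fisher_density (exp (- t)) x \<partial>std_gaussian) \<longlongrightarrow> 0) at_top" .
  moreover have "\<forall>\<^sub>F t in at_top. (\<integral>\<^sup>+x. scaled_fisher_density (exp (- t)) x \<partial>std_gaussian)
      = ennreal (exp (2 * t)) * fisher (OU t f)"
    using eventually_gt_at_top[of 0] by eventually_elim (simp add: exp_fisher_OU_eq)
  ultimately show ?thesis
    by (rule Lim_transform_eventually)
qed

end

text \<open>Smoothness of \<open>f\<close> is only used for measurability.\<close>

theorem corollary5p2:
  fixes f :: "'a::euclidean_space \<Rightarrow> real"
  assumes smooth: "smooth_fun f"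
    and nonneg: "\<And>x. f x \<ge> 0"
    and prob: "integrable std_gaussian f" "(\<integral>x. f x \<partial>std_gaussian) = 1"
    and mean: "integrable std_gaussian (\<lambda>x. f x *\<^sub>R x)"
              "(\<integral>x. f x *\<^sub>R x \<partial>std_gaussian) = 0"
    and second: "integrable std_gaussian (\<lambda>x. (norm x)\<^sup>2 * f x)"
    and fin: "fisher f < \<infinity>"
  shows "((\<lambda>t. ennreal (exp (2 * t)) * fisher (OU t f)) \<longlongrightarrow> 0) at_top"
proof -
  have "continuous_on UNIV f"
    using smooth by (simp add: smooth_fun_def Ck.simps(1)[symmetric] del: Ck.simps)
  then interpret second_moment_weight f
    using nonneg prob(1) second by unfold_locales (simp_all add: borel_measurable_continuous_onI)
  show ?thesis
    using prob(2) mean(2) by (intro exp_fisher_OU_tendsto_0) simp_all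
qed

end
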